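(* There exists $\gamma_0>0$ such that for every $\gamma\in(0,\gamma_0]$ there exists $n_0$ such that the following holds for every even integer $n\ge n_0$. Suppose $G$ is a graph on $n$ vertices with $\sigma(G)\ge n-\gamma n$. Then one of the following holds: (i) $G$ admits a perfect matching; (ii) $G$ contains a $2\gamma$-independent set of size at least $\frac n2$; (iii) $G$ has exactly two connected components $C_1$ and $C_2$, each of odd order, and moreover, if $|C_i|\le\frac{1-\gamma}{2}n$ for some $i\in\{1,2\}$, then $C_i$ is a clique.
   Context: All graphs are finite and simple. $\sigma(G):=\min\{d(x)+d(y): x\ne y,\ xy\notin E(G)\}$ ($+\infty$ if $G$ is complete). For an $n$-vertex graph $G$ and $\gamma>0$, a set $S\subseteq V(G)$ is $\gamma$-independent if $G[S]$ has at most $\gamma n^2$ edges. *)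

theory Defs
  imports "HOL-Analysis.Analysis"
begin

definition simple_graph :: "'a set \<Rightarrow> 'a set set \<Rightarrow> bool" where
  "simple_graph V E \<longleftrightarrow> finite V \<and> (\<forall>e\<in>E. \<exists>x y. e = {x, y} \<and> x \<in> V \<and> y \<in> V \<and> x \<noteq> y)"

definition degree :: "'a set \<Rightarrow> 'a set set \<Rightarrow> 'a \<Rightarrow> nat" where
  "degree V E x = card {y \<in> V. {x, y} \<in> E}"

text \<open>sigma(G) = min of d(x)+d(y) over distinct non-adjacent pairs; +infinity if complete.\<close>
definition sigma :: "'a set \<Rightarrow> 'a set set \<Rightarrow> ereal" where
  "sigma V E = (INF p \<in> {(x, y). x \<in> V \<and> y \<in> V \<and> x \<noteq> y \<and> {x, y} \<notin> E}.
                   ereal (real (degree V E (fst p) + degree V E (snd p))))"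

definition perfect_matching :: "'a set \<Rightarrow> 'a set set \<Rightarrow> 'a set set \<Rightarrow> bool" where
  "perfect_matching V E M \<longleftrightarrow> M \<subseteq> E \<and> (\<forall>v\<in>V. \<exists>!e. e \<in> M \<and> v \<in> e)"

definition has_perfect_matching :: "'a set \<Rightarrow> 'a set set \<Rightarrow> bool" where
  "has_perfect_matching V E \<longleftrightarrow> (\<exists>M. perfect_matching V E M)"

definition gamma_independent :: "'a set \<Rightarrow> 'a set set \<Rightarrow> real \<Rightarrow> 'a set \<Rightarrow> bool" where
  "gamma_independent V E \<gamma> S \<longleftrightarrow> S \<subseteq> V \<and>
     real (card {e \<in> E. e \<subseteq> S}) \<le> \<gamma> * (real (card V))\<^sup>2"

definition reach :: "'a set \<Rightarrow> 'a set set \<Rightarrow> ('a \<times> 'a) set" where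
  "reach V E = ({(x, y). {x, y} \<in> E})\<^sup>* \<inter> (V \<times> V)"

definition components :: "'a set \<Rightarrow> 'a set set \<Rightarrow> 'a set set" where
  "components V E = V // reach V E"

definition clique :: "'a set set \<Rightarrow> 'a set \<Rightarrow> bool" where
  "clique E C \<longleftrightarrow> (\<forall>x\<in>C. \<forall>y\<in>C. x \<noteq> y \<longrightarrow> {x, y} \<in> E)"

end

theory Submission
  imports Defs
begin

lemma simple_graph_edgeD:
  assumes "simple_graph V E" "{x, y} \<in> E"
  shows "x \<noteq> y" "x \<in> V" "y \<in> V"
proof -
  obtain u v where "{x, y} = {u, v}" "u \<in> V" "v \<in> V" "u \<noteq> v"
    using assms unfolding simple_graph_def by blast
  then show "x \<noteq> y" "x \<in> V" "y \<in> V" by (auto simp: doubleton_eq_iff)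
qed

lemma simple_graph_edges_Pow: "simple_graph V E \<Longrightarrow> E \<subseteq> Pow V"
  unfolding simple_graph_def by fastforce

lemma sym_edge_relation: "sym {(x, y). {x, y} \<in> E}"
  by (rule symI) (simp add: insert_commute)

lemma equiv_reach: "equiv V (reach V E)"
proof (rule equivI)
  show "refl_on V (reach V E)" unfolding reach_def refl_on_def by blast
  show "sym (reach V E)"
  proof (rule symI)
    fix x y assume "(x, y) \<in> reach V E"
    then show "(y, x) \<in> reach V E"
      using symD[OF sym_rtrancl[OF sym_edge_relation], of x y] unfolding reach_def by simp
  qed
  show "trans (reach V E)" unfolding reach_def by (auto intro: transI rtrancl_trans)
qed (auto simp: reach_def)

lemma partition_on_components: "partition_on V (components V E)"
  unfolding components_def by (rule partition_on_quotient[OF equiv_reach])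

lemma components_subset: "C \<in> components V E \<Longrightarrow> C \<subseteq> V"
  using in_quotient_imp_subset[OF equiv_reach] unfolding components_def by blast

lemma components_no_edge_between:
  assumes "C \<in> components V E" "D \<in> components V E" "C \<noteq> D" "x \<in> C" "y \<in> D"
  shows "{x, y} \<notin> E"
proof
  assume "{x, y} \<in> E"
  moreover have "x \<in> V" "y \<in> V" using assms components_subset by blast+
  ultimately have "(x, y) \<in> reach V E" unfolding reach_def by (simp add: r_into_rtrancl)
  then show False
    using assms quotient_eqI[OF equiv_reach] unfolding components_def by metis
qed

lemma components_connected:
  assumes "C \<in> components V E" "x \<in> C" "y \<in> C"
  shows "(x, y) \<in> {(u, v). {u, v} \<in> E}\<^sup>*"
proof -
  have "(x, y) \<in> reach V E"
    using in_quotient_imp_in_rel[OF equiv_reach assms(1)[unfolded components_def]] assms(2,3)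
    by simp
  then show ?thesis unfolding reach_def by simp
qed

lemma components_eqI:
  assumes P: "partition_on V P"
    and closed: "\<And>C x y. C \<in> P \<Longrightarrow> x \<in> C \<Longrightarrow> {x, y} \<in> E \<Longrightarrow> y \<in> C"
    and connected: "\<And>C x y. C \<in> P \<Longrightarrow> x \<in> C \<Longrightarrow> y \<in> C \<Longrightarrow> (x, y) \<in> {(u, v). {u, v} \<in> E}\<^sup>*"
  shows "components V E = P"
proof -
  have "(x, y) \<in> reach V E \<longleftrightarrow> (\<exists>C\<in>P. x \<in> C \<and> y \<in> C)" for x y
  proof
    assume "(x, y) \<in> reach V E"
    then have xy: "(x, y) \<in> {(u, v). {u, v} \<in> E}\<^sup>*" "x \<in> V" unfolding reach_def by simp_all
    obtain C where C: "C \<in> P" "x \<in> C" using P xy(2) unfolding partition_on_def by auto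
    from xy(1) have "y \<in> C" by (induction rule: rtrancl_induct) (auto intro: closed[OF C(1)] C(2))
    with C show "\<exists>C\<in>P. x \<in> C \<and> y \<in> C" by auto
  next
    assume "\<exists>C\<in>P. x \<in> C \<and> y \<in> C"
    then obtain C where "C \<in> P" "x \<in> C" "y \<in> C" by auto
    moreover have "C \<subseteq> V" using P \<open>C \<in> P\<close> unfolding partition_on_def by auto
    ultimately show "(x, y) \<in> reach V E"
      using connected unfolding reach_def by auto
  qed
  then have "reach V E = {(x, y). \<exists>C\<in>P. x \<in> C \<and> y \<in> C}" by auto
  then show ?thesis unfolding components_def using partition_on_eq_quotient[OF P] by simp
qed

definition matching_involution :: "'a set \<Rightarrow> 'a set set \<Rightarrow> ('a \<Rightarrow> 'a) \<Rightarrow> bool" where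
  "matching_involution V E f \<longleftrightarrow> (\<forall>x\<in>V. f x \<in> V \<and> f x \<noteq> x \<and> f (f x) = x \<and> {x, f x} \<in> E)"

lemma matching_involutionD:
  assumes "matching_involution V E f" "x \<in> V"
  shows "f x \<in> V" "f x \<noteq> x" "f (f x) = x" "{x, f x} \<in> E"
  using assms unfolding matching_involution_def by auto

lemma matching_involutionI:
  assumes "\<And>x. x \<in> V \<Longrightarrow> f x \<in> V \<and> f x \<noteq> x \<and> f (f x) = x \<and> {x, f x} \<in> E"
  shows "matching_involution V E f"
  using assms unfolding matching_involution_def by blast

lemma has_perfect_matching_if_matching_involution:
  assumes f: "matching_involution V E f"
  shows "has_perfect_matching V E"
proof -
  let ?M = "(\<lambda>x. {x, f x}) ` V"
  have "\<exists>!e. e \<in> ?M \<and> v \<in> e" if v: "v \<in> V" for v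
  proof (rule ex1I[of _ "{v, f v}"])
    fix e assume "e \<in> ?M \<and> v \<in> e"
    then obtain x where "x \<in> V" "e = {x, f x}" "v = x \<or> v = f x" by auto
    then show "e = {v, f v}" using matching_involutionD[OF f] by auto
  qed (use v in blast)+
  moreover have "?M \<subseteq> E" using matching_involutionD(4)[OF f] by blast
  ultimately have "perfect_matching V E ?M"
    unfolding perfect_matching_def by blast
  then show ?thesis unfolding has_perfect_matching_def by blast
qed

lemma matching_involution_edge:
  assumes "{x, y} \<in> E" "x \<noteq> y"
  shows "matching_involution {x, y} E (\<lambda>z. if z = x then y else x)"
  using assms by (intro matching_involutionI) (auto simp: insert_commute)

lemma matching_involution_Un:
  assumes AB: "A \<inter> B = {}" and f: "matching_involution A E f" and g: "matching_involution B E g"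
  shows "matching_involution (A \<union> B) E (\<lambda>z. if z \<in> A then f z else g z)"
proof (rule matching_involutionI)
  fix z assume z: "z \<in> A \<union> B"
  show "(if z \<in> A then f z else g z) \<in> A \<union> B \<and> (if z \<in> A then f z else g z) \<noteq> z \<and>
    (if (if z \<in> A then f z else g z) \<in> A then f (if z \<in> A then f z else g z)
     else g (if z \<in> A then f z else g z)) = z \<and> {z, if z \<in> A then f z else g z} \<in> E"
  proof (cases "z \<in> A")
    case True
    then show ?thesis using matching_involutionD[OF f True] by simp
  next
    case False
    with z have "z \<in> B" by blast
    moreover have "g z \<notin> A" using AB matching_involutionD(1)[OF g \<open>z \<in> B\<close>] by blast
    ultimately show ?thesis using False matching_involutionD[OF g \<open>z \<in> B\<close>] by simp
  qed
qed

lemma matching_involution_restrict: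
  assumes f: "matching_involution V (insert e E) f" and "A \<subseteq> V" "f ` A \<subseteq> A"
    and "\<forall>x\<in>A. {x, f x} \<noteq> e"
  shows "matching_involution A E f"
proof (rule matching_involutionI)
  fix x assume x: "x \<in> A"
  then have "x \<in> V" using assms(2) by blast
  moreover have "{x, f x} \<noteq> e" using assms(4) x by blast
  ultimately show "f x \<in> A \<and> f x \<noteq> x \<and> f (f x) = x \<and> {x, f x} \<in> E"
    using matching_involutionD[OF f] assms(3) x by auto
qed

lemma matching_involution_image_Diff:
  assumes f: "matching_involution V E f" and "f ` A \<subseteq> A"
  shows "f ` (V - A) \<subseteq> V - A"
proof
  fix y assume "y \<in> f ` (V - A)"
  then obtain x where x: "x \<in> V" "x \<notin> A" "y = f x" by blast
  with assms(2) matching_involutionD(1,3)[OF f x(1)] show "y \<in> V - A" by force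
qed

lemma matching_involution_remove_edge:
  assumes f: "matching_involution V (insert {a, c} E) f" and "a \<in> V" "f a \<noteq> c"
  shows "matching_involution V E f"
proof (rule matching_involution_restrict[OF f order.refl])
  show "f ` V \<subseteq> V" using matching_involutionD(1)[OF f] by blast
  show "\<forall>x\<in>V. {x, f x} \<noteq> {a, c}"
  proof (intro ballI notI)
    fix x assume x: "x \<in> V" "{x, f x} = {a, c}"
    with matching_involutionD(3)[OF f x(1)] assms(3) show False
      by (metis doubleton_eq_iff)
  qed
qed

lemma matching_involution_Un_ex:
  assumes "A \<inter> B = {}" "\<exists>f. matching_involution A E f" "\<exists>g. matching_involution B E g"
  shows "\<exists>h. matching_involution (A \<union> B) E h"
proof -
  from assms(2,3) obtain f g where "matching_involution A E f" "matching_involution B E g" by blast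
  from matching_involution_Un[OF assms(1) this] show ?thesis by blast
qed

lemma matching_involution_insert_edge:
  assumes "{x, y} \<in> E" "x \<noteq> y" "x \<notin> A" "y \<notin> A" "\<exists>f. matching_involution A E f"
  shows "\<exists>f. matching_involution (insert x (insert y A)) E f"
proof -
  have "{x, y} \<inter> A = {}" using assms(3,4) by simp
  from matching_involution_Un_ex[OF this _ assms(5)] matching_involution_edge[OF assms(1,2)]
  have "\<exists>f. matching_involution ({x, y} \<union> A) E f" by blast
  then show ?thesis by simp
qed

lemma cliqueD: "clique E C \<Longrightarrow> x \<in> C \<Longrightarrow> y \<in> C \<Longrightarrow> x \<noteq> y \<Longrightarrow> {x, y} \<in> E"
  unfolding clique_def by simp

lemma clique_subset: "clique E C \<Longrightarrow> D \<subseteq> C \<Longrightarrow> clique E D"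
  unfolding clique_def by (meson subsetD)

lemma clique_matching_involution:
  assumes "finite C" "clique E C" "even (card C)"
  shows "\<exists>f. matching_involution C E f"
  using assms
proof (induction "card C" arbitrary: C rule: less_induct)
  case less
  show ?case
  proof (cases "C = {}")
    case True
    then show ?thesis unfolding matching_involution_def by blast
  next
    case False
    then obtain x where x: "x \<in> C" by blast
    have "C \<noteq> {x}" using less.prems(3) by (intro notI) simp
    then obtain y where y: "y \<in> C" "y \<noteq> x" using x by blast
    let ?C' = "C - {x, y}"
    have card_C': "card ?C' = card C - 2"
      using less.prems(1) x y by (simp add: card_Diff_subset)
    moreover have "card C > 0" using less.prems(1) x card_gt_0_iff by blast
    ultimately have "card ?C' < card C" by linarith
    moreover have "finite ?C'" using less.prems(1) by simp
    moreover have "clique E ?C'" using clique_subset[OF less.prems(2)] by blast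
    moreover have "even (card ?C')" using card_C' less.prems(3) by simp
    ultimately have "\<exists>g. matching_involution ?C' E g" by (rule less.hyps)
    moreover have "{x, y} \<in> E" using cliqueD[OF less.prems(2) x y(1)] y(2) by simp
    ultimately have ex: "\<exists>f. matching_involution (insert x (insert y ?C')) E f"
      using y(2) by (intro matching_involution_insert_edge) auto
    have "insert x (insert y ?C') = C" using x y by auto
    with ex show ?thesis by (simp only:)
  qed
qed

lemma matching_involution_add_odd_clique:
  assumes A: "\<exists>f. matching_involution A E f" and C: "finite C" "clique E C" "odd (card C)"
    and disj: "C \<inter> A = {}" "s \<notin> A" "s \<notin> C" and edges: "\<forall>v\<in>C. {s, v} \<in> E"
  shows "\<exists>f. matching_involution (insert s (C \<union> A)) E f"
proof -
  obtain r where r: "r \<in> C" using C(3) by (metis card.empty ex_in_conv odd_card_imp_not_empty)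
  have "even (card (C - {r}))" using C(1,3) r by simp
  then have "\<exists>g. matching_involution (C - {r}) E g"
    using C(1,2) by (intro clique_matching_involution) (auto intro: clique_subset)
  with A disj(1) have "\<exists>f. matching_involution ((C - {r}) \<union> A) E f"
    by (intro matching_involution_Un_ex) auto
  moreover have "{r, s} \<in> E" using edges r by (simp add: insert_commute)
  ultimately have "\<exists>f. matching_involution (insert r (insert s ((C - {r}) \<union> A))) E f"
    using r disj by (intro matching_involution_insert_edge) auto
  moreover have "insert r (insert s ((C - {r}) \<union> A)) = insert s (C \<union> A)" using r by auto
  ultimately show ?thesis by (simp only:)
qed

lemma clique_blocks_matching_involution:
  assumes "finite P"
    and "finite S" "clique E S" "\<forall>C\<in>P. finite C \<and> clique E C" "disjoint P" "S \<inter> \<Union>P = {}"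
    and "\<forall>s\<in>S. \<forall>v\<in>\<Union>P. {s, v} \<in> E"
    and "card {C\<in>P. odd (card C)} \<le> card S" "even (card S + (\<Sum>C\<in>P. card C))"
  shows "\<exists>f. matching_involution (S \<union> \<Union>P) E f"
  using assms(1) assms(2-)
proof (induction P arbitrary: S rule: finite_induct)
  case empty
  then show ?case using clique_matching_involution by simp
next
  case (insert C P)
  have C: "finite C" "clique E C" and P: "\<forall>D\<in>P. finite D \<and> clique E D"
    using insert.prems(3) by simp_all
  have disjoint_P: "disjoint P" using insert.prems(4) by (simp add: pairwise_insert)
  have CP: "C \<inter> \<Union>P = {}"
    using insert.prems(4) insert.hyps(2) by (auto simp: pairwise_insert disjnt_def)
  have SC: "S \<inter> C = {}" and SP: "S \<inter> \<Union>P = {}" using insert.prems(5) by auto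
  have edges: "\<forall>s\<in>S. \<forall>v\<in>\<Union>P. {s, v} \<in> E" using insert.prems(6) by simp
  let ?odd = "\<lambda>P. card {D\<in>P. odd (card D)}"
  have odd_insert: "?odd (insert C P) = (if odd (card C) then Suc (?odd P) else ?odd P)"
  proof -
    have "{D\<in>insert C P. odd (card D)}
        = (if odd (card C) then insert C {D\<in>P. odd (card D)} else {D\<in>P. odd (card D)})" by auto
    then show ?thesis using insert.hyps by simp
  qed
  have sum_insert: "(\<Sum>D\<in>insert C P. card D) = card C + (\<Sum>D\<in>P. card D)"
    using insert.hyps by simp
  have union: "S \<union> \<Union>(insert C P) = C \<union> (S \<union> \<Union>P)" by auto
  show ?case
  proof (cases "even (card C)")
    case True
    have "\<exists>f. matching_involution (S \<union> \<Union>P) E f"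
      using insert.prems(7,8) True odd_insert sum_insert
      by (intro insert.IH[OF insert.prems(1,2) P disjoint_P SP edges]) auto
    moreover have "\<exists>g. matching_involution C E g"
      using C True by (rule clique_matching_involution)
    moreover have "C \<inter> (S \<union> \<Union>P) = {}" using SC CP by auto
    ultimately show ?thesis unfolding union by (metis matching_involution_Un_ex)
  next
    case False
    then have "?odd (insert C P) > 0" using odd_insert by simp
    then obtain s where s: "s \<in> S" using insert.prems(7) by (metis card.empty ex_in_conv le_zero_eq not_gr0)
    have "\<exists>f. matching_involution ((S - {s}) \<union> \<Union>P) E f"
      using insert.prems(1,7,8) False odd_insert sum_insert s SP
      by (intro insert.IH) (auto simp: card_Diff_singleton clique_subset[OF insert.prems(2)] P edges disjoint_P)
    then have "\<exists>f. matching_involution (insert s (C \<union> ((S - {s}) \<union> \<Union>P))) E f"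
      using C False SC CP SP s insert.prems(6)
      by (intro matching_involution_add_odd_clique) auto
    moreover have "insert s (C \<union> ((S - {s}) \<union> \<Union>P)) = S \<union> \<Union>(insert C P)" using s by auto
    ultimately show ?thesis by (simp only:)
  qed
qed

primrec alternating_walk :: "('a \<Rightarrow> 'a) \<Rightarrow> ('a \<Rightarrow> 'a) \<Rightarrow> 'a \<Rightarrow> nat \<Rightarrow> 'a" where
  "alternating_walk g h b 0 = b"
| "alternating_walk g h b (Suc j) = (if even j then g else h) (alternating_walk g h b j)"

declare alternating_walk.simps(2) [simp del]

locale two_involutions =
  fixes V :: "'a set" and g h :: "'a \<Rightarrow> 'a" and b :: 'a
  assumes g: "\<And>x. x \<in> V \<Longrightarrow> g x \<in> V \<and> g x \<noteq> x \<and> g (g x) = x"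
    and h: "\<And>x. x \<in> V \<Longrightarrow> h x \<in> V \<and> h x \<noteq> x \<and> h (h x) = x"
    and b: "b \<in> V"
begin

abbreviation walk :: "nat \<Rightarrow> 'a" where
  "walk \<equiv> alternating_walk g h b"

lemma walk_Suc: "walk (Suc j) = (if even j then g else h) (walk j)"
  by (rule alternating_walk.simps(2))

lemma walk_in_V: "walk j \<in> V"
  by (induction j) (simp_all add: b g h walk_Suc)

lemma walk_back: "(if even j then g else h) (walk (Suc j)) = walk j"
  using g[OF walk_in_V] h[OF walk_in_V] by (simp add: walk_Suc)

lemma g_walk: "g (walk j) = (if even j then walk (Suc j) else walk (j - 1))"
  using walk_back[of "j - 1"] walk_Suc[of j] by (cases j) auto

lemma h_walk: "0 < j \<Longrightarrow> h (walk j) = (if odd j then walk (Suc j) else walk (j - 1))"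
  using walk_back[of "j - 1"] walk_Suc[of j] by (cases j) auto

lemma walk_odd_distance: "walk j \<noteq> walk (j + 2 * m + 1)"
proof (induction m arbitrary: j)
  case 0
  have "walk (Suc j) \<noteq> walk j" using g[OF walk_in_V[of j]] h[OF walk_in_V[of j]] by (simp add: walk_Suc)
  then show ?case by simp
next
  case (Suc m)
  show ?case
  proof
    assume eq: "walk j = walk (j + 2 * Suc m + 1)"
    have "walk (Suc j + 2 * m + 1) = (if even j then g else h) (walk (j + 2 * Suc m + 1))"
      using walk_back[of "j + 2 * m + 2"] by simp
    also have "\<dots> = walk (Suc j)" unfolding eq[symmetric] by (simp add: walk_Suc)
    finally show False using Suc.IH[of "Suc j"] by simp
  qed
qed

lemma walk_even_return:
  assumes "even k" "walk j = walk (j + k)"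
  shows "walk k = b"
  using assms(2)
proof (induction j)
  case 0
  then show ?case by simp
next
  case (Suc j)
  have "walk j = (if even j then g else h) (walk (Suc j))" using walk_back[of j] by simp
  also have "\<dots> = (if even (j + k) then g else h) (walk (Suc (j + k)))"
    using Suc.prems assms(1) by simp
  also have "\<dots> = walk (j + k)" by (rule walk_back)
  finally show ?case by (rule Suc.IH)
qed

lemma walk_returns:
  assumes "finite V"
  shows "\<exists>N>0. even N \<and> walk N = b"
proof -
  have "\<not> inj (\<lambda>j. walk (2 * j))"
  proof
    assume "inj (\<lambda>j. walk (2 * j))"
    moreover have "range (\<lambda>j. walk (2 * j)) \<subseteq> V" using walk_in_V by blast
    ultimately show False
      using finite_imageD[of "\<lambda>j. walk (2 * j)" UNIV] finite_subset assms by auto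
  qed
  then obtain j k where "j < k" "walk (2 * j) = walk (2 * k)"
    unfolding inj_def by (metis linorder_neqE_nat)
  then have "walk (2 * (k - j)) = b"
    by (intro walk_even_return[of _ "2 * j"]) (auto simp: algebra_simps)
  then show ?thesis using \<open>j < k\<close> by (intro exI[of _ "2 * (k - j)"]) auto
qed

lemma g_walk_segment:
  assumes "even n"
  shows "g ` walk ` {..<n} \<subseteq> walk ` {..<n}"
proof -
  have "g (walk j) \<in> walk ` {..<n}" if "j < n" for j
  proof (cases "even j")
    case True
    then have "Suc j < n" using that assms by (metis Suc_lessI even_Suc)
    then show ?thesis using True g_walk by auto
  qed (use that g_walk in auto)
  then show ?thesis by auto
qed

lemma h_walk_interior:
  assumes "odd n"
  shows "h ` walk ` {0<..<n} \<subseteq> walk ` {0<..<n}"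
proof -
  have "h (walk j) \<in> walk ` {0<..<n}" if "0 < j" "j < n" for j
  proof (cases "odd j")
    case True
    then have "Suc j < n" using that assms by (metis Suc_lessI even_Suc)
    then show ?thesis using True h_walk[OF that(1)] by auto
  next
    case False
    then have "0 < j - 1" using that(1) by presburger
    then show ?thesis using False h_walk[OF that(1)] that(2) by auto
  qed
  then show ?thesis by auto
qed

lemma h_walk_return_segment:
  assumes "even n" "0 < n" "walk n = b"
  shows "h ` walk ` {..<n} \<subseteq> walk ` {..<n}"
proof -
  have "h (walk j) \<in> walk ` {..<n}" if "j < n" for j
  proof (cases "j = 0")
    case True
    then have "h (walk j) = walk (n - 1)" using h_walk[OF assms(2)] assms(1,3) by simp
    then show ?thesis using assms(2) by auto
  next
    case False
    then have "h (walk j) = walk (if odd j then Suc j else j - 1)" using h_walk[of j] by simp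
    moreover have "walk (if odd j then Suc j else j - 1) \<in> walk ` {..<n}"
    proof (cases "odd j \<and> Suc j = n")
      case True
      then show ?thesis using assms(2,3) by (auto intro!: image_eqI[of _ walk 0])
    qed (use that in \<open>auto intro!: imageI\<close>)
    ultimately show ?thesis by simp
  qed
  then show ?thesis by auto
qed

end

locale matching_exchange =
  fixes V :: "'a set" and E :: "'a set set" and f1 f2 :: "'a \<Rightarrow> 'a" and a b c d :: 'a
  assumes finite_V: "finite V"
    and f1: "matching_involution V (insert {a, c} E) f1" and f1_a: "f1 a = c"
    and f2: "matching_involution V (insert {b, d} E) f2" and f2_b: "f2 b = d"
    and in_V: "a \<in> V" "b \<in> V"
    and ab: "{a, b} \<in> E" and bc: "{b, c} \<in> E" and b_ne: "b \<noteq> a" "b \<noteq> c"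
begin

sublocale two_involutions V f2 f1 b
  using matching_involutionD[OF f1] matching_involutionD[OF f2] in_V(2) by unfold_locales auto

lemma f1_c: "f1 c = a"
  using matching_involutionD(3)[OF f1 in_V(1)] f1_a by simp

lemma splice:
  assumes "I \<subseteq> W" "W \<subseteq> V" "f1 ` I \<subseteq> I" "a \<notin> I" "c \<notin> I" "f2 ` W \<subseteq> W" "b \<in> W" "d \<in> W"
    and W_I: "\<exists>h. matching_involution (W - I) E h"
  shows "\<exists>f. matching_involution V E f"
proof -
  have "matching_involution I E f1"
  proof (rule matching_involution_restrict[OF f1])
    show "I \<subseteq> V" using assms(1,2) by (rule order.trans)
    show "\<forall>x\<in>I. {x, f1 x} \<noteq> {a, c}" using assms(4,5) by (auto simp: doubleton_eq_iff)
  qed (rule assms(3))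
  then have I: "\<exists>f. matching_involution I E f" by blast
  have "matching_involution (V - W) E f2"
  proof (rule matching_involution_restrict[OF f2])
    show "f2 ` (V - W) \<subseteq> V - W" using matching_involution_image_Diff[OF f2 assms(6)] .
    show "\<forall>x\<in>V - W. {x, f2 x} \<noteq> {b, d}" using assms(7,8) by (metis DiffD2 doubleton_eq_iff)
  qed auto
  then have V_W: "\<exists>f. matching_involution (V - W) E f" by blast
  have "I \<inter> (W - I) = {}" "(I \<union> (W - I)) \<inter> (V - W) = {}" using assms(1) by auto
  from matching_involution_Un_ex[OF this(2) matching_involution_Un_ex[OF this(1) I W_I] V_W]
  have "\<exists>f. matching_involution (I \<union> (W - I) \<union> (V - W)) E f" .
  moreover have "I \<union> (W - I) \<union> (V - W) = V" using assms(1,2) by auto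
  ultimately show ?thesis by (simp only:)
qed

definition first_hit :: nat where
  "first_hit = (LEAST i. 0 < i \<and> walk i \<in> {a, b, c})"

lemma first_hit: "0 < first_hit" "walk first_hit \<in> {a, b, c}"
  and before_first_hit: "0 < j \<Longrightarrow> j < first_hit \<Longrightarrow> walk j \<notin> {a, b, c}"
proof -
  obtain N where "0 < N" "walk N = b" using walk_returns[OF finite_V] by blast
  then have ex: "\<exists>i. 0 < i \<and> walk i \<in> {a, b, c}" by blast
  show "0 < first_hit" "walk first_hit \<in> {a, b, c}"
    using LeastI_ex[OF ex] unfolding first_hit_def by simp_all
  show "0 < j \<Longrightarrow> j < first_hit \<Longrightarrow> walk j \<notin> {a, b, c}"
    using not_less_Least[of j "\<lambda>i. 0 < i \<and> walk i \<in> {a, b, c}"] unfolding first_hit_def by auto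
qed

lemma walk_0_not_ac: "walk 0 \<notin> {a, c}"
  using b_ne by simp

lemma exchange_if_return:
  assumes return: "walk first_hit = b"
  shows "\<exists>f. matching_involution V E f"
proof -
  let ?i = first_hit and ?W = "walk ` {..<first_hit}"
  have i: "even ?i"
  proof (rule ccontr)
    assume "odd ?i"
    then obtain m where "?i = 2 * m + 1" by (rule oddE)
    then show False using walk_odd_distance[of 0 m] return by simp
  qed
  have "\<forall>j<?i. walk j \<notin> {a, c}"
    using before_first_hit walk_0_not_ac by (metis insert_iff not_gr0)
  then have ac: "a \<notin> ?W" "c \<notin> ?W" by auto
  have "walk 1 = d" using f2_b walk_Suc[of 0] by simp
  moreover have "1 < ?i" using first_hit(1) i by (metis One_nat_def Suc_lessI odd_one)
  ultimately have d: "d \<in> ?W" by (intro image_eqI[of d walk 1]) auto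
  have b: "b \<in> ?W" using first_hit(1) by (intro image_eqI[of b walk 0]) auto
  have W_V: "?W \<subseteq> V" using walk_in_V by auto
  have "\<exists>h. matching_involution (?W - ?W) E h" unfolding matching_involution_def by simp
  from splice[OF order.refl W_V h_walk_return_segment[OF i first_hit(1) return] ac
      g_walk_segment[OF i] b d this]
  show ?thesis .
qed

lemma first_hit_odd:
  assumes "walk first_hit \<in> {a, c}"
  shows "odd first_hit"
proof
  assume i: "even first_hit"
  have "f1 (walk first_hit) \<in> {a, c}" using assms f1_a f1_c by auto
  then have "walk (first_hit - 1) \<in> {a, c}" using h_walk[OF first_hit(1)] i by simp
  moreover have "0 < first_hit - 1"
    using first_hit(1) i by (metis One_nat_def Suc_lessI odd_one zero_less_diff)
  ultimately show False using before_first_hit[of "first_hit - 1"] by auto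
qed

lemma exchange_if_hit:
  assumes hit: "walk first_hit \<in> {a, c}"
  shows "\<exists>f. matching_involution V E f"
proof -
  let ?i = first_hit and ?x = "walk first_hit"
  let ?I = "walk ` {0<..<first_hit}" and ?W = "walk ` {..<Suc first_hit}"
  have i: "odd ?i" by (rule first_hit_odd[OF hit])
  have "y \<notin> {a, b, c}" if "y \<in> ?I" for y
  proof -
    from that obtain j where "0 < j" "j < ?i" "y = walk j" by auto
    then show ?thesis using before_first_hit[of j] by simp
  qed
  then have I_abc: "a \<notin> ?I" "b \<notin> ?I" "c \<notin> ?I" by (meson insertCI)+
  have "{..<Suc ?i} = insert 0 (insert ?i {0<..<?i})" using first_hit(1) by auto
  then have W: "?W = insert b (insert ?x ?I)" by simp
  have "?x \<notin> ?I" using hit I_abc by auto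
  then have "?W - ?I = {b, ?x}" unfolding W using I_abc(2) by auto
  moreover have "\<exists>h. matching_involution {b, ?x} E h"
  proof -
    have "?x = a \<or> ?x = c" using hit by simp
    then have "{b, ?x} \<in> E" "b \<noteq> ?x" using ab bc b_ne by (metis insert_commute, metis)
    from matching_involution_edge[OF this] show ?thesis by blast
  qed
  ultimately have W_I: "\<exists>h. matching_involution (?W - ?I) E h" by simp
  have d: "d \<in> ?W" using f2_b walk_Suc[of 0] first_hit(1) by (intro image_eqI[of d walk 1]) auto
  have b: "b \<in> ?W" and I_W: "?I \<subseteq> ?W" unfolding W by auto
  have W_V: "?W \<subseteq> V" using walk_in_V by auto
  have "even (Suc ?i)" using i by simp
  from splice[OF I_W W_V h_walk_interior[OF i] I_abc(1,3) g_walk_segment[OF this] b d W_I]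
  show ?thesis .
qed

theorem exchange: "\<exists>f. matching_involution V E f"
  using first_hit(2) exchange_if_return exchange_if_hit by auto

end

definition separating_partition :: "'a set \<Rightarrow> 'a set set \<Rightarrow> 'a set \<Rightarrow> 'a set set \<Rightarrow> bool" where
  "separating_partition V E S P \<longleftrightarrow> S \<subseteq> V \<and> partition_on (V - S) P \<and>
     (\<forall>C\<in>P. \<forall>D\<in>P. C \<noteq> D \<longrightarrow> (\<forall>x\<in>C. \<forall>y\<in>D. {x, y} \<notin> E))"

definition universal_vertices :: "'a set \<Rightarrow> 'a set set \<Rightarrow> 'a set" where
  "universal_vertices V E = {x\<in>V. \<forall>y\<in>V. x \<noteq> y \<longrightarrow> {x, y} \<in> E}"

definition maximal_unmatchable :: "'a set \<Rightarrow> 'a set set \<Rightarrow> bool" where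
  "maximal_unmatchable V E \<longleftrightarrow> (\<nexists>f. matching_involution V E f) \<and>
     (\<forall>x\<in>V. \<forall>y\<in>V. x \<noteq> y \<longrightarrow> {x, y} \<notin> E \<longrightarrow> (\<exists>f. matching_involution V (insert {x, y} E) f))"

lemma separating_partition_mono:
  "separating_partition V E' S P \<Longrightarrow> E \<subseteq> E' \<Longrightarrow> separating_partition V E S P"
  unfolding separating_partition_def by (meson subsetD)

lemma rtrancl_exit_neighbourhood:
  assumes "(x, y) \<in> R\<^sup>*" "y \<noteq> x" "(x, y) \<notin> R"
  shows "\<exists>b c. (x, b) \<in> R \<and> (b, c) \<in> R \<and> c \<noteq> x \<and> (x, c) \<notin> R"
  using assms
proof (induction rule: rtrancl_induct)
  case (step z y)
  then show ?case by (cases "z = x \<or> (x, z) \<notin> R") auto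
qed simp

lemma simple_graph_insert:
  "simple_graph V E \<Longrightarrow> x \<in> V \<Longrightarrow> y \<in> V \<Longrightarrow> x \<noteq> y \<Longrightarrow> simple_graph V (insert {x, y} E)"
  unfolding simple_graph_def by auto

lemma obtain_saturated_supergraph:
  assumes G: "simple_graph V E" and no_pm: "\<nexists>f. matching_involution V E f"
  obtains E' where "E \<subseteq> E'" "simple_graph V E'" "maximal_unmatchable V E'"
proof -
  let ?Cand = "{E'. E \<subseteq> E' \<and> simple_graph V E' \<and> (\<nexists>f. matching_involution V E' f)}"
  have "finite V" using G unfolding simple_graph_def by simp
  have "?Cand \<subseteq> Pow (Pow V)" using simple_graph_edges_Pow by auto
  then have "finite ?Cand" by (rule finite_subset) (simp add: \<open>finite V\<close>)
  moreover have "E \<in> ?Cand" using G no_pm by simp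
  ultimately have "\<exists>E'\<in>?Cand. \<forall>F\<in>?Cand. E' \<le> F \<longrightarrow> E' = F"
    by (intro finite_has_maximal) auto
  then obtain E' where E': "E' \<in> ?Cand" and max: "\<forall>F\<in>?Cand. E' \<le> F \<longrightarrow> E' = F" ..
  have saturated: "\<exists>f. matching_involution V (insert {x, y} E') f"
    if xy: "x \<in> V" "y \<in> V" "x \<noteq> y" "{x, y} \<notin> E'" for x y
  proof (rule ccontr)
    assume "\<nexists>f. matching_involution V (insert {x, y} E') f"
    with E' simple_graph_insert[OF _ xy(1-3)] have "insert {x, y} E' \<in> ?Cand" by auto
    from max[rule_format, OF this subset_insertI] have "{x, y} \<in> E'"
      by (metis insertI1)
    with xy(4) show False by contradiction
  qed
  show thesis
  proof (rule that[of E'])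
    show "maximal_unmatchable V E'"
      unfolding maximal_unmatchable_def using E' saturated by auto
  qed (use E' in auto)
qed

lemma saturated_path_center_universal:
  assumes G: "simple_graph V E" and max: "maximal_unmatchable V E"
    and ab: "{a, b} \<in> E" and bc: "{b, c} \<in> E" and ac: "a \<noteq> c" "{a, c} \<notin> E"
  shows "b \<in> universal_vertices V E"
proof (rule ccontr)
  assume "b \<notin> universal_vertices V E"
  moreover have V: "a \<in> V" "b \<in> V" "c \<in> V" and b_ne: "b \<noteq> a" "b \<noteq> c"
    using simple_graph_edgeD[OF G ab] simple_graph_edgeD[OF G bc] by auto
  ultimately obtain d where d: "d \<in> V" "b \<noteq> d" "{b, d} \<notin> E"
    unfolding universal_vertices_def by auto
  have no_pm: "\<nexists>f. matching_involution V E f"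
    and saturated: "\<And>x y. x \<in> V \<Longrightarrow> y \<in> V \<Longrightarrow> x \<noteq> y \<Longrightarrow> {x, y} \<notin> E \<Longrightarrow>
       \<exists>f. matching_involution V (insert {x, y} E) f"
    using max unfolding maximal_unmatchable_def by auto
  from saturated[OF V(1,3) ac] obtain f1 where f1: "matching_involution V (insert {a, c} E) f1" ..
  from saturated[OF V(2) d] obtain f2 where f2: "matching_involution V (insert {b, d} E) f2" ..
  have "f1 a = c" using matching_involution_remove_edge[OF f1 V(1)] no_pm by metis
  moreover have "f2 b = d" using matching_involution_remove_edge[OF f2 V(2)] no_pm by metis
  moreover have "finite V" using G unfolding simple_graph_def by simp
  ultimately interpret matching_exchange V E f1 f2 a b c d
    using f1 f2 V ab bc b_ne by unfold_locales
  show False using exchange no_pm by blast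
qed

lemma saturated_component_clique:
  assumes G: "simple_graph V E" and max: "maximal_unmatchable V E"
    and C: "C \<in> components (V - universal_vertices V E) {e\<in>E. e \<subseteq> V - universal_vertices V E}"
  shows "clique E C"
  unfolding clique_def
proof (intro ballI impI)
  fix x y assume x: "x \<in> C" and y: "y \<in> C" and "x \<noteq> y"
  let ?W = "V - universal_vertices V E"
  let ?R = "{(u, v). {u, v} \<in> {e\<in>E. e \<subseteq> ?W}}"
  have "C \<subseteq> ?W" by (rule components_subset[OF C])
  show "{x, y} \<in> E"
  proof (rule ccontr)
    assume "{x, y} \<notin> E"
    then have "(x, y) \<notin> ?R" by simp
    from rtrancl_exit_neighbourhood[OF components_connected[OF C x y] _ this] \<open>x \<noteq> y\<close>
    obtain b c where bc: "(x, b) \<in> ?R" "(b, c) \<in> ?R" "c \<noteq> x" "(x, c) \<notin> ?R"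
      by auto
    have "x \<in> ?W" using x \<open>C \<subseteq> ?W\<close> by blast
    with bc have "{x, b} \<in> E" "{b, c} \<in> E" "{x, c} \<notin> E" "b \<in> ?W" by auto
    with saturated_path_center_universal[OF G max this(1,2) bc(3)[symmetric] this(3)]
    show False by simp
  qed
qed

lemma universal_vertices_subset: "universal_vertices V E \<subseteq> V"
  unfolding universal_vertices_def by auto

lemma saturated_tutte_barrier:
  assumes G: "simple_graph V E" and even: "even (card V)" and max: "maximal_unmatchable V E"
  shows "\<exists>S P. separating_partition V E S P \<and> card S < card {C\<in>P. odd (card C)}"
proof -
  define S where "S = universal_vertices V E"
  define P where "P = components (V - S) {e\<in>E. e \<subseteq> V - S}"
  have fin: "finite V" using G unfolding simple_graph_def by simp
  have part: "partition_on (V - S) P" unfolding P_def by (rule partition_on_components)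
  have sep: "separating_partition V E S P"
    unfolding separating_partition_def
  proof (intro conjI ballI impI)
    fix C D x y assume CD: "C \<in> P" "D \<in> P" "C \<noteq> D" and xy: "x \<in> C" "y \<in> D"
    then have "x \<in> V - S" "y \<in> V - S" using components_subset unfolding P_def by blast+
    with components_no_edge_between[OF CD[unfolded P_def] xy] show "{x, y} \<notin> E" by simp
  qed (use part in \<open>auto simp: S_def universal_vertices_subset\<close>)
  have "card S < card {C\<in>P. odd (card C)}"
  proof (rule ccontr)
    assume few_odd: "\<not> ?thesis"
    have finite: "finite P" "finite S"
      using finite_elements[OF _ part] fin finite_subset[OF universal_vertices_subset fin]
      unfolding S_def by simp_all
    have union: "S \<union> \<Union>P = V" using partition_onD1[OF part] universal_vertices_subset[of V E]
      unfolding S_def by auto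
    have parts: "\<forall>C\<in>P. finite C \<and> clique E C"
    proof
      fix C assume C: "C \<in> P"
      then have "C \<subseteq> V" using components_subset unfolding P_def by blast
      with C show "finite C \<and> clique E C"
        using finite_subset[OF _ fin] saturated_component_clique[OF G max] unfolding P_def S_def by blast
    qed
    have "card (\<Union>P) = (\<Sum>C\<in>P. card C)"
      using card_Union_disjoint[OF partition_onD2[OF part]] parts by simp
    moreover have "card S + card (\<Union>P) = card V"
      using union fin partition_onD1[OF part] by (metis Diff_disjoint card_Un_disjoint finite_Un)
    moreover have "\<forall>s\<in>S. \<forall>v\<in>\<Union>P. {s, v} \<in> E"
    proof (intro ballI)
      fix s v assume "s \<in> S" "v \<in> \<Union>P"
      then have "v \<in> V" "s \<noteq> v" using partition_onD1[OF part] by auto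
      with \<open>s \<in> S\<close> show "{s, v} \<in> E" unfolding S_def universal_vertices_def by auto
    qed
    moreover have "clique E S" unfolding clique_def S_def universal_vertices_def by simp
    ultimately have "\<exists>f. matching_involution (S \<union> \<Union>P) E f"
      using parts few_odd even partition_onD1[OF part] partition_onD2[OF part] finite
      by (intro clique_blocks_matching_involution) auto
    with max show False unfolding union maximal_unmatchable_def by blast
  qed
  with sep show ?thesis by blast
qed

theorem tutte_barrier:
  assumes G: "simple_graph V E" and even: "even (card V)"
    and no_pm: "\<nexists>f. matching_involution V E f"
  shows "\<exists>S P. separating_partition V E S P \<and> card S < card {C\<in>P. odd (card C)}"
proof -
  obtain E' where "E \<subseteq> E'" "simple_graph V E'" "maximal_unmatchable V E'"
    using obtain_saturated_supergraph[OF G no_pm] by blast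
  with saturated_tutte_barrier[OF _ even] separating_partition_mono show ?thesis by meson
qed

lemma sigma_le_degree_sum:
  assumes "sigma V E \<ge> ereal r" "x \<in> V" "y \<in> V" "x \<noteq> y" "{x, y} \<notin> E"
  shows "r \<le> real (degree V E x + degree V E y)"
proof -
  have "sigma V E \<le> ereal (real (degree V E x + degree V E y))"
    unfolding sigma_def using assms(2-5) by (intro INF_lower2[of "(x, y)"]) auto
  with assms(1) have "ereal r \<le> ereal (real (degree V E x + degree V E y))" by (rule order.trans)
  then show ?thesis by (simp only: ereal_less_eq)
qed

lemma pairwise_sum_lower:
  fixes f :: "'b \<Rightarrow> real"
  assumes P: "finite P" "2 \<le> card P" and pairs: "\<And>C D. C \<in> P \<Longrightarrow> D \<in> P \<Longrightarrow> C \<noteq> D \<Longrightarrow> L \<le> f C + f D"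
  shows "real (card P) * L \<le> 2 * sum f P"
proof -
  let ?c = "real (card P)"
  have card_Diff: "real (card (P - {C})) = ?c - 1" if "C \<in> P" for C
    using that P by (simp add: card_Diff_singleton)
  have inner: "(\<Sum>D\<in>P - {C}. f C + f D) = (?c - 1) * f C + (sum f P - f C)" if "C \<in> P" for C
    using that P card_Diff[OF that] by (simp add: sum.distrib sum_diff1)
  have "?c * ((?c - 1) * L) \<le> (\<Sum>C\<in>P. \<Sum>D\<in>P - {C}. f C + f D)"
  proof -
    have "(?c - 1) * L \<le> (\<Sum>D\<in>P - {C}. f C + f D)" if "C \<in> P" for C
    proof -
      have "\<forall>D\<in>P - {C}. L \<le> f C + f D" using pairs[OF that] by auto
      then have "real (card (P - {C})) * L \<le> (\<Sum>D\<in>P - {C}. f C + f D)"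
        using sum_bounded_below[of "P - {C}" L "\<lambda>D. f C + f D"] by auto
      then show ?thesis using card_Diff[OF that] by simp
    qed
    from sum_bounded_below[of P "(?c - 1) * L", OF this] show ?thesis by simp
  qed
  also have "\<dots> = (\<Sum>C\<in>P. (?c - 1) * f C + (sum f P - f C))"
    using inner by (rule sum.cong[OF refl])
  also have "\<dots> = (?c - 1) * sum f P + (?c * sum f P - sum f P)"
    by (simp add: sum.distrib sum_subtractf sum_distrib_left)
  finally have "(?c - 1) * (?c * L) \<le> (?c - 1) * (2 * sum f P)" by (simp add: algebra_simps)
  moreover have "?c - 1 > 0" using P(2) by simp
  ultimately show ?thesis by simp
qed
context
  fixes V :: "'a set" and E S P
  assumes G: "simple_graph V E" and sep: "separating_partition V E S P"
begin

lemma separating_partition_facts: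
  shows "S \<subseteq> V" "\<Union>P = V - S" "disjoint P" "finite P" "\<And>C. C \<in> P \<Longrightarrow> C \<noteq> {}"
    and "\<And>C. C \<in> P \<Longrightarrow> finite C" "\<And>C. C \<in> P \<Longrightarrow> C \<subseteq> V - S"
proof -
  have fin: "finite V" using G unfolding simple_graph_def by simp
  have part: "partition_on (V - S) P" using sep unfolding separating_partition_def by simp
  show "S \<subseteq> V" using sep unfolding separating_partition_def by simp
  show "\<Union>P = V - S" "disjoint P" using part by (auto simp: partition_on_def)
  show "finite P" using finite_elements[OF _ part] fin by simp
  show "C \<noteq> {}" if "C \<in> P" for C using part that by (auto simp: partition_on_def)
  show "C \<subseteq> V - S" if "C \<in> P" for C using part that by (auto simp: partition_on_def)
  then show "C \<in> P \<Longrightarrow> finite C" for C using fin by (meson finite_Diff finite_subset)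
qed

lemma separating_partition_no_edge:
  "C \<in> P \<Longrightarrow> D \<in> P \<Longrightarrow> C \<noteq> D \<Longrightarrow> x \<in> C \<Longrightarrow> y \<in> D \<Longrightarrow> {x, y} \<notin> E"
  using sep unfolding separating_partition_def by blast

lemma card_parts_sum: "card S + (\<Sum>C\<in>P. card C) = card V"
proof -
  have fin: "finite V" using G unfolding simple_graph_def by simp
  have "(\<Sum>C\<in>P. card C) = card (V - S)"
    using card_Union_disjoint[of P] separating_partition_facts by simp
  then show ?thesis
    using separating_partition_facts(1) fin by (simp add: card_Diff_subset card_mono finite_subset)
qed

lemma degree_le_part:
  assumes C: "C \<in> P" and x: "x \<in> C"
  shows "degree V E x \<le> card C - 1 + card S"
proof -
  have "{y\<in>V. {x, y} \<in> E} \<subseteq> (C - {x}) \<union> S"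
  proof
    fix y assume y: "y \<in> {y\<in>V. {x, y} \<in> E}"
    then have "y \<noteq> x" using simple_graph_edgeD(1)[OF G] by blast
    moreover have "y \<in> C" if "y \<notin> S"
    proof -
      from that y obtain D where "D \<in> P" "y \<in> D" using separating_partition_facts(2) by auto
      with y separating_partition_no_edge[OF C _ _ x] show ?thesis by auto
    qed
    ultimately show "y \<in> (C - {x}) \<union> S" by blast
  qed
  moreover have "finite ((C - {x}) \<union> S)"
    using separating_partition_facts(1) separating_partition_facts(6)[OF C] G finite_subset
    unfolding simple_graph_def by auto
  ultimately have "degree V E x \<le> card ((C - {x}) \<union> S)" unfolding degree_def by (rule card_mono[rotated])
  also have "\<dots> \<le> card (C - {x}) + card S" by (rule card_Un_le)
  finally show ?thesis using x by simp
qed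

lemma card_edges_within_parts: "card {e\<in>E. e \<subseteq> V - S} \<le> (\<Sum>C\<in>P. card C choose 2)"
proof -
  let ?pairs = "\<lambda>C. {e. e \<subseteq> C \<and> card e = 2}"
  have "{e\<in>E. e \<subseteq> V - S} \<subseteq> (\<Union>C\<in>P. ?pairs C)"
  proof
    fix e assume e: "e \<in> {e\<in>E. e \<subseteq> V - S}"
    then obtain x y where xy: "e = {x, y}" "x \<noteq> y" using G unfolding simple_graph_def by auto
    with e have "x \<in> \<Union>P" "y \<in> \<Union>P" using separating_partition_facts(2) by auto
    then obtain C D where C: "C \<in> P" "x \<in> C" and D: "D \<in> P" "y \<in> D" by auto
    have "C = D"
    proof (rule ccontr)
      assume "C \<noteq> D"
      from separating_partition_no_edge[OF C(1) D(1) this C(2) D(2)] e xy(1) show False by simp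
    qed
    with C D xy show "e \<in> (\<Union>C\<in>P. ?pairs C)" by auto
  qed
  then have "card {e\<in>E. e \<subseteq> V - S} \<le> card (\<Union>C\<in>P. ?pairs C)"
    using separating_partition_facts(4,6) by (intro card_mono) auto
  also have "\<dots> \<le> (\<Sum>C\<in>P. card (?pairs C))" by (rule card_UN_le[OF separating_partition_facts(4)])
  also have "\<dots> = (\<Sum>C\<in>P. card C choose 2)"
    using separating_partition_facts(6) by (intro sum.cong) (auto simp: n_subsets)
  finally show ?thesis .
qed

lemma part_card_le: "C \<in> P \<Longrightarrow> card C + card P \<le> card V - card S + 1"
proof -
  assume C: "C \<in> P"
  have "card (P - {C}) * 1 \<le> (\<Sum>D\<in>P - {C}. card D)"
    using sum_bounded_below[of "P - {C}" 1 card] separating_partition_facts(5,6)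
    by (force simp: Suc_le_eq card_gt_0_iff)
  moreover have "(\<Sum>D\<in>P. card D) = card C + (\<Sum>D\<in>P - {C}. card D)"
    using C separating_partition_facts(4) by (simp add: sum.remove)
  ultimately show ?thesis using card_parts_sum C separating_partition_facts(4) by simp
qed

lemma part_pair_card_lower:
  assumes "sigma V E \<ge> ereal r" "C \<in> P" "D \<in> P" "C \<noteq> D"
  shows "r - 2 * real (card S) + 2 \<le> real (card C) + real (card D)"
proof -
  obtain x y where xy: "x \<in> C" "y \<in> D"
    using separating_partition_facts(5) assms(2,3) by blast
  have "x \<noteq> y" using xy assms(2-4) separating_partition_facts(3) by (auto simp: disjoint_def)
  moreover have "x \<in> V" "y \<in> V" using xy assms(2,3) separating_partition_facts(7) by blast+
  moreover have "{x, y} \<notin> E" using separating_partition_no_edge[OF assms(2-4) xy] .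
  ultimately have "r \<le> real (degree V E x + degree V E y)"
    using sigma_le_degree_sum[OF assms(1)] by blast
  moreover have "card C \<ge> 1" "card D \<ge> 1"
    using xy assms(2,3) separating_partition_facts(6) by (auto simp: Suc_le_eq card_gt_0_iff)
  ultimately show ?thesis
    using degree_le_part[OF assms(2) xy(1)] degree_le_part[OF assms(3) xy(2)] by linarith
qed

end

lemma barrier_arith:
  fixes n s c \<gamma> :: real
  assumes \<gamma>: "\<gamma> \<le> 1/6" and n: "37 \<le> n" and s: "1 \<le> s" and c: "s + 2 \<le> c"
    and bound: "c * (n - \<gamma> * n - 2 * s + 2) \<le> 2 * (n - s)"
  shows "n - 2 * s \<le> \<gamma> * n + 4"
proof (rule ccontr)
  assume contra: "\<not> ?thesis"
  define L where "L = n - \<gamma> * n - 2 * s + 2"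
  have L6: "6 < L" using contra unfolding L_def by simp
  have "(s + 2) * L \<le> c * L" using c L6 by (intro mult_right_mono) auto
  with bound have main: "(s + 2) * L \<le> 2 * (n - s)" unfolding L_def by simp
  have \<gamma>n: "\<gamma> * n \<le> n / 6" using mult_right_mono[OF \<gamma>, of n] n by simp
  have "(s + 2) * 6 \<le> (s + 2) * L" using L6 s by (intro mult_left_mono) auto
  with main have "s \<le> n / 4" by simp
  with \<gamma>n have "n / 3 \<le> L" unfolding L_def by simp
  then have "(s + 2) * (n / 3) \<le> (s + 2) * L" using s by (intro mult_left_mono) auto
  also have "\<dots> \<le> 2 * (n - s)" by (rule main)
  also have "\<dots> \<le> 2 * n" using s by simp
  finally have "(s + 2) * (n / 3) \<le> 2 * n" .
  then have "(s - 4) * n \<le> 0" by (simp add: algebra_simps)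
  then have "s \<le> 4" using n by (simp add: mult_le_0_iff)
  with \<gamma>n have "3 * (5 * n / 6 - 6) \<le> 3 * L" unfolding L_def by simp
  also have "\<dots> \<le> (s + 2) * L" using s L6 by (intro mult_right_mono) auto
  also have "\<dots> \<le> 2 * (n - s)" by (rule main)
  finally show False using n s by simp
qed

locale dense_barrier =
  fixes V :: "'a set" and E S P and \<gamma> :: real
  assumes G: "simple_graph V E" and sep: "separating_partition V E S P"
    and odd_excess: "card S < card {C\<in>P. odd (card C)}"
    and even: "even (card V)"
    and sigma: "sigma V E \<ge> ereal (real (card V) - \<gamma> * real (card V))"
begin

lemmas facts = separating_partition_facts[OF G sep]

lemma odd_parts_ge: "card S + 2 \<le> card {C\<in>P. odd (card C)}"
proof -
  have "even (\<Sum>C\<in>P. card C) \<longleftrightarrow> even (card {C\<in>P. odd (card C)})"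
    using even_sum_iff[OF facts(4)] by simp
  then have "even (card S + card {C\<in>P. odd (card C)})"
    using card_parts_sum[OF G sep] even by (metis even_add)
  with odd_excess show ?thesis by presburger
qed

lemma card_parts_ge: "card S + 2 \<le> card P"
  using odd_parts_ge card_mono[OF facts(4), of "{C\<in>P. odd (card C)}"] by simp

lemma card_parts_le: "card P \<le> card V - card S"
proof -
  have "card P * 1 \<le> (\<Sum>C\<in>P. card C)"
    using sum_bounded_below[of P 1 card] facts(5,6) by (force simp: Suc_le_eq card_gt_0_iff)
  then show ?thesis using card_parts_sum[OF G sep] by simp
qed

lemma parts_pair_bound:
  "real (card P) * (real (card V) - \<gamma> * real (card V) - 2 * real (card S) + 2)
     \<le> 2 * (real (card V) - real (card S))"
proof -
  have "real (card P) * (real (card V) - \<gamma> * real (card V) - 2 * real (card S) + 2)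
      \<le> 2 * (\<Sum>C\<in>P. real (card C))"
    using card_parts_ge part_pair_card_lower[OF G sep sigma]
    by (intro pairwise_sum_lower[OF facts(4)]) auto
  also have "(\<Sum>C\<in>P. real (card C)) = real (card V) - real (card S)"
    using card_parts_sum[OF G sep] by (metis add_diff_cancel_left' of_nat_add of_nat_sum)
  finally show ?thesis .
qed

lemma two_odd_parts:
  assumes "S = {}" "\<gamma> \<le> 1/3"
  obtains C1 C2 where "P = {C1, C2}" "C1 \<noteq> C2" "odd (card C1)" "odd (card C2)"
proof -
  let ?n = "real (card V)"
  have "card P = 2"
  proof (rule ccontr)
    assume "card P \<noteq> 2"
    then have "3 \<le> real (card P)" using card_parts_ge assms(1) by simp
    moreover have \<gamma>n: "\<gamma> * ?n \<le> ?n / 3" using mult_right_mono[OF assms(2), of ?n] by simp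
    then have "0 \<le> ?n - \<gamma> * ?n + 2" by simp
    ultimately have "3 * (?n - \<gamma> * ?n + 2) \<le> real (card P) * (?n - \<gamma> * ?n + 2)"
      by (rule mult_right_mono)
    also have "\<dots> \<le> 2 * ?n" using parts_pair_bound assms(1) by simp
    finally show False using \<gamma>n by simp
  qed
  moreover have "card {C\<in>P. odd (card C)} \<le> card P" using facts(4) by (intro card_mono) auto
  then have "{C\<in>P. odd (card C)} = P"
    using odd_parts_ge assms(1) \<open>card P = 2\<close> facts(4) by (intro card_subset_eq) auto
  moreover from \<open>card P = 2\<close> obtain C1 C2 where P: "P = {C1, C2}" "C1 \<noteq> C2"
    unfolding card_2_iff by blast
  ultimately have "odd (card C1)" "odd (card C2)" by (metis (no_types, lifting) insertCI mem_Collect_eq)+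
  with P show ?thesis by (rule that)
qed

lemma small_part_clique:
  assumes "S = {}" "C \<in> P" "real (card C) \<le> (1 - \<gamma>) / 2 * real (card V)"
  shows "clique E C"
  unfolding clique_def
proof (intro ballI impI)
  fix x y assume xy: "x \<in> C" "y \<in> C" "x \<noteq> y"
  show "{x, y} \<in> E"
  proof (rule ccontr)
    assume "{x, y} \<notin> E"
    with xy sigma_le_degree_sum[OF sigma] facts(7)[OF assms(2)]
    have "real (card V) - \<gamma> * real (card V) \<le> real (degree V E x) + real (degree V E y)" by auto
    moreover have "card C \<ge> 1" using xy facts(6)[OF assms(2)] by (auto simp: Suc_le_eq card_gt_0_iff)
    then have "real (degree V E z) \<le> real (card C) - 1" if "z \<in> C" for z
      using degree_le_part[OF G sep assms(2) that] assms(1) by simp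
    moreover have "2 * real (card C) \<le> real (card V) - \<gamma> * real (card V)"
      using assms(3) by (simp add: field_simps)
    ultimately show False using xy(1,2) by (smt (verit))
  qed
qed

lemma degree_sum_without_common_neighbour:
  assumes S: "S = {}" and A: "A \<in> P" and xy: "x \<in> A" "y \<in> A" "x \<noteq> y" "{x, y} \<notin> E"
    and none: "\<nexists>z. {x, z} \<in> E \<and> {z, y} \<in> E"
  shows "real (degree V E x) + real (degree V E y) \<le> real (card A) - 2"
proof -
  let ?N = "\<lambda>v. {z\<in>V. {v, z} \<in> E}"
  have fin: "finite A" "finite V" using facts(6)[OF A] G unfolding simple_graph_def by auto
  have disj: "?N x \<inter> ?N y = {}"
  proof (rule equals0I)
    fix z assume "z \<in> ?N x \<inter> ?N y"
    then have "{x, z} \<in> E" "{z, y} \<in> E" by (auto simp: insert_commute)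
    with none show False by metis
  qed
  have sub: "?N x \<union> ?N y \<subseteq> A - {x, y}"
  proof
    fix z assume "z \<in> ?N x \<union> ?N y"
    then obtain v where v: "v = x \<or> v = y" "z \<in> V" "{v, z} \<in> E" by auto
    have "z \<noteq> x" "z \<noteq> y"
      using v simple_graph_edgeD(1)[OF G v(3)] xy(4) by (auto simp: insert_commute)
    moreover have "z \<in> A"
    proof -
      from v(2) S facts(2) obtain D where "D \<in> P" "z \<in> D" by auto
      with separating_partition_no_edge[OF G sep A _ _ _ this(2), of v] v(1,3) xy(1,2)
      show ?thesis by auto
    qed
    ultimately show "z \<in> A - {x, y}" by auto
  qed
  have "degree V E x + degree V E y = card (?N x \<union> ?N y)"
    unfolding degree_def using card_Un_disjoint[OF _ _ disj] fin(2) by simp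
  also have "\<dots> \<le> card (A - {x, y})" using sub fin(1) by (intro card_mono) auto
  also have "\<dots> = card A - 2" using xy fin by (simp add: card_Diff_subset)
  finally have "real (degree V E x + degree V E y) \<le> real (card A - 2)" by (rule of_nat_mono)
  moreover have "2 \<le> card A" using card_mono[OF fin(1), of "{x, y}"] xy by simp
  ultimately show ?thesis by simp
qed

lemma common_neighbour:
  assumes S: "S = {}" and \<gamma>: "\<gamma> \<le> 1/3" and P: "P = {A, B}" "A \<noteq> B"
    and xy: "x \<in> A" "y \<in> A" "x \<noteq> y" "{x, y} \<notin> E"
  shows "\<exists>z. {x, z} \<in> E \<and> {z, y} \<in> E"
proof (rule ccontr)
  assume none: "\<nexists>z. {x, z} \<in> E \<and> {z, y} \<in> E"
  let ?n = "real (card V)"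
  have dxy: "real (degree V E x) + real (degree V E y) \<le> real (card A) - 2"
    using degree_sum_without_common_neighbour[OF S _ xy none] P by simp
  obtain w where w: "w \<in> B" using facts(5)[of B] P by auto
  have "degree V E w \<le> card B - 1" using degree_le_part[OF G sep _ w] P S by simp
  then have "real (degree V E w) \<le> real (card B - 1)" by (rule of_nat_mono)
  moreover have "1 \<le> card B" using facts(6)[of B] P w by (auto simp: Suc_le_eq card_gt_0_iff)
  ultimately have dw: "real (degree V E w) \<le> real (card B) - 1" by simp
  have "A \<inter> B = {}" using facts(3) P by (auto simp: disjoint_def)
  then have "{x, w} \<notin> E" "{y, w} \<notin> E" "x \<noteq> w" "y \<noteq> w"
    using separating_partition_no_edge[OF G sep _ _ P(2)] xy(1,2) w P by auto
  moreover have "x \<in> V" "y \<in> V" "w \<in> V" using facts(7) xy(1,2) w P by blast+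
  ultimately have "?n - \<gamma> * ?n \<le> real (degree V E x) + real (degree V E w)"
    "?n - \<gamma> * ?n \<le> real (degree V E y) + real (degree V E w)"
    "?n - \<gamma> * ?n \<le> real (degree V E x) + real (degree V E y)"
    using sigma_le_degree_sum[OF sigma] xy(3,4) by auto
  moreover have "card A + card B = card V" using card_parts_sum[OF G sep] P S by simp
  moreover have "\<gamma> * ?n \<le> ?n / 3" using mult_right_mono[OF \<gamma>, of ?n] by simp
  ultimately show False using dxy dw by linarith
qed

lemma components_two_parts:
  assumes S: "S = {}" and \<gamma>: "\<gamma> \<le> 1/3" and P: "P = {A, B}" "A \<noteq> B"
  shows "components V E = P"
proof (rule components_eqI)
  show "partition_on V P" using sep S unfolding separating_partition_def by simp
  show "y \<in> C" if "C \<in> P" "x \<in> C" "{x, y} \<in> E" for C x y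
  proof -
    from that(3) S facts(2) simple_graph_edgeD(3)[OF G] obtain D where "D \<in> P" "y \<in> D" by auto
    with separating_partition_no_edge[OF G sep that(1) this(1) _ that(2)] that(3) show ?thesis by auto
  qed
  show "(x, y) \<in> {(u, v). {u, v} \<in> E}\<^sup>*" if "C \<in> P" "x \<in> C" "y \<in> C" for C x y
  proof -
    consider "x = y" | "{x, y} \<in> E" | "x \<noteq> y" "{x, y} \<notin> E" by blast
    then show ?thesis
    proof cases
      case 3
      have "P = {C, if C = A then B else A}" "C \<noteq> (if C = A then B else A)"
        using that(1) P by auto
      from common_neighbour[OF S \<gamma> this that(2,3) 3] obtain z where "{x, z} \<in> E" "{z, y} \<in> E" by blast
      then show ?thesis by (metis (mono_tags) case_prodI mem_Collect_eq r_into_rtrancl rtrancl.rtrancl_into_rtrancl)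
    qed auto
  qed
qed

lemma sparse_outside_barrier:
  assumes S: "S \<noteq> {}" and \<gamma>: "\<gamma> \<le> 1/6" and n: "37 \<le> card V" "2 \<le> \<gamma> * card V"
  shows "gamma_independent V E (2 * \<gamma>) (V - S)" "real (card V) / 2 \<le> real (card (V - S))"
proof -
  let ?n = "card V" and ?s = "card S"
  have fin: "finite V" using G unfolding simple_graph_def by simp
  have "1 \<le> ?s" using S finite_subset[OF facts(1) fin] by (simp add: Suc_le_eq card_gt_0_iff)
  then have small: "real ?n - 2 * real ?s \<le> \<gamma> * real ?n + 4"
    using barrier_arith[OF \<gamma>, of "real ?n" "real ?s" "real (card P)"] n(1) card_parts_ge parts_pair_bound
    by simp
  have s_n: "2 * ?s + 2 \<le> ?n" using card_parts_ge card_parts_le by simp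
  have card_VS: "card (V - S) = ?n - ?s" using facts(1) fin by (simp add: card_Diff_subset finite_subset)
  then show "real ?n / 2 \<le> real (card (V - S))" using s_n by simp
  have "card C choose 2 \<le> card C * (?n - 2 * ?s - 2)" if "C \<in> P" for C
  proof -
    have "card C - 1 \<le> ?n - 2 * ?s - 2" using part_card_le[OF G sep that] card_parts_ge by simp
    then have "card C * (card C - 1) \<le> card C * (?n - 2 * ?s - 2)" by (rule mult_left_mono) simp
    then show ?thesis unfolding choose_two by linarith
  qed
  then have "(\<Sum>C\<in>P. card C choose 2) \<le> (\<Sum>C\<in>P. card C * (?n - 2 * ?s - 2))"
    by (rule sum_mono)
  with card_edges_within_parts[OF G sep]
  have "card {e\<in>E. e \<subseteq> V - S} \<le> (\<Sum>C\<in>P. card C) * (?n - 2 * ?s - 2)"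
    by (simp add: sum_distrib_right)
  also have "\<dots> \<le> ?n * (?n - 2 * ?s - 2)" using card_parts_sum[OF G sep] by simp
  finally have "real (card {e\<in>E. e \<subseteq> V - S}) \<le> real (?n * (?n - 2 * ?s - 2))"
    by (rule of_nat_mono)
  also have "\<dots> = real ?n * (real ?n - 2 * real ?s - 2)" using s_n by simp
  also have "\<dots> \<le> real ?n * (\<gamma> * real ?n + 2)" using small by (intro mult_left_mono) auto
  also have "\<dots> \<le> 2 * \<gamma> * (real ?n)\<^sup>2"
  proof -
    have "real ?n * 2 \<le> real ?n * (\<gamma> * real ?n)" using n(2) by (intro mult_left_mono) auto
    then show ?thesis by (simp add: power2_eq_square algebra_simps)
  qed
  finally show "gamma_independent V E (2 * \<gamma>) (V - S)" unfolding gamma_independent_def by auto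
qed

end

lemma (in dense_barrier) independent_set_or_two_odd_components:
  assumes \<gamma>: "\<gamma> \<le> 1/6" and n: "37 \<le> card V" "2 \<le> \<gamma> * card V"
  shows "(\<exists>S. gamma_independent V E (2 * \<gamma>) S \<and> real (card S) \<ge> real (card V) / 2)
    \<or> (\<exists>C1 C2. components V E = {C1, C2} \<and> C1 \<noteq> C2 \<and> odd (card C1) \<and> odd (card C2) \<and>
         (\<forall>C \<in> {C1, C2}. real (card C) \<le> (1 - \<gamma>) / 2 * real (card V) \<longrightarrow> clique E C))"
proof (cases "S = {}")
  case True
  have "\<gamma> \<le> 1/3" using \<gamma> by simp
  then obtain C1 C2 where P: "P = {C1, C2}" "C1 \<noteq> C2" "odd (card C1)" "odd (card C2)"
    using two_odd_parts[OF True] by blast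
  moreover have "components V E = P" by (rule components_two_parts[OF True \<open>\<gamma> \<le> 1/3\<close> P(1,2)])
  moreover have "clique E C" if "C \<in> P" "real (card C) \<le> (1 - \<gamma>) / 2 * real (card V)" for C
    using small_part_clique[OF True that] .
  ultimately have "components V E = {C1, C2} \<and> C1 \<noteq> C2 \<and> odd (card C1) \<and> odd (card C2) \<and>
    (\<forall>C \<in> {C1, C2}. real (card C) \<le> (1 - \<gamma>) / 2 * real (card V) \<longrightarrow> clique E C)" by auto
  then show ?thesis by blast
next
  case False
  with sparse_outside_barrier[OF False \<gamma> n] show ?thesis by auto
qed

theorem perfect_matching_or_extremal_structure:
  fixes V :: "'a set" and \<gamma> :: real
  assumes \<gamma>: "0 < \<gamma>" "\<gamma> \<le> 1/6" and n: "even (card V)" "nat \<lceil>2 / \<gamma>\<rceil> + 37 \<le> card V"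
    and G: "simple_graph V E" and sigma: "sigma V E \<ge> ereal (real (card V) - \<gamma> * real (card V))"
  shows "has_perfect_matching V E
    \<or> (\<exists>S. gamma_independent V E (2 * \<gamma>) S \<and> real (card S) \<ge> real (card V) / 2)
    \<or> (\<exists>C1 C2. components V E = {C1, C2} \<and> C1 \<noteq> C2 \<and> odd (card C1) \<and> odd (card C2) \<and>
         (\<forall>C \<in> {C1, C2}. real (card C) \<le> (1 - \<gamma>) / 2 * real (card V) \<longrightarrow> clique E C))"
proof (cases "\<exists>f. matching_involution V E f")
  case False
  then obtain S P where "separating_partition V E S P" "card S < card {C\<in>P. odd (card C)}"
    using tutte_barrier[OF G n(1)] by blast
  then interpret dense_barrier V E S P \<gamma> using G n(1) sigma by unfold_locales
  have "2 / \<gamma> \<le> real (card V)" using n(2) by linarith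
  then have "2 \<le> \<gamma> * real (card V)" using \<gamma>(1) by (simp add: field_simps)
  with \<gamma>(2) n(2) show ?thesis using independent_set_or_two_odd_components by auto
qed (use has_perfect_matching_if_matching_involution in blast)

theorem proposition2p9:
  "\<exists>\<gamma>0::real. \<gamma>0 > 0 \<and>
     (\<forall>\<gamma>. 0 < \<gamma> \<and> \<gamma> \<le> \<gamma>0 \<longrightarrow>
       (\<exists>n0::nat. \<forall>n::nat. even n \<and> n \<ge> n0 \<longrightarrow>
         (\<forall>(V::nat set) (E::nat set set).
            simple_graph V E \<and> card V = n \<and> sigma V E \<ge> ereal (real n - \<gamma> * real n) \<longrightarrow>
              has_perfect_matching V E
            \<or> (\<exists>S. gamma_independent V E (2 * \<gamma>) S \<and> real (card S) \<ge> real n / 2)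
            \<or> (\<exists>C1 C2. components V E = {C1, C2} \<and> C1 \<noteq> C2 \<and> odd (card C1) \<and> odd (card C2) \<and>
                 (\<forall>C \<in> {C1, C2}. real (card C) \<le> (1 - \<gamma>) / 2 * real n \<longrightarrow> clique E C)))))"
  apply (intro exI[of _ "1/6"] conjI allI impI)
   apply simp
  subgoal for \<gamma>
    using perfect_matching_or_extremal_structure[of \<gamma>]
    by (intro exI[of _ "nat \<lceil>2 / \<gamma>\<rceil> + 37"] allI impI) blast
  done

end
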